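(* There exist constants $c > 0$ and $n_0$ such that for every $n \ge n_0$ there exists a word $w$ of length $4n^2$ over an alphabet of $n$ symbols such that $TG(w)$ is a temporal path graph on $n$ vertices and every temporal walk in $TG(w)$ that visits all $n$ vertices has length at least $c n^2$ (i.e. exploring $TG(w)$ requires $\Omega(n^2)$ timesteps).
   Context: For a word $w$, $w[i]$ is its $i$-th letter, $w[i,j]$ the factor $w[i]\cdots w[j]$, $\mathrm{letters}(u)$ the set of symbols occurring in $u$, and $\pi_{\mathcal S}(w)$ the subsequence of $w$ of all occurrences of symbols in $\mathcal S$. Symbols $x,y$ alternate in $w$ if $\pi_{\{x,y\}}(w) \in \{(xy)^k, (xy)^kx, (yx)^k, (yx)^ky : k \ge 0\}$. $G(w)$ has one vertex $v_a$ per alphabet symbol $a$ and undirected edge $(v_x,v_y)$ iff $x\neq y$ alternate in $w$. Start points: $S_1=1$, and $S_i$ is the least index $j>S_{i-1}$ with $w[j] \in \mathrm{letters}(w[S_{i-1},j-1])$; $S_1<\dots<S_T$ are all start points. The $t$-th timestep factor is $w[S_t,S_{t+1}-1]$ ($t<T$) or $w[S_T,|w|]$ ($t=T$). $TG(w)=(V,E_1,\dots,E_T)$ with $E_t$ the set of edges $(v_x,v_y)$ of $G(w)$ with $x$ or $y$ occurring in the $t$-th timestep factor. A temporal path graph is such a $TG(w)$ whose underlying graph $(V,\bigcup_t E_t)$ is a path. A temporal walk is a sequence $(e_1,t_1),\dots,(e_k,t_k)$ with $e_i\in E_{t_i}$, the end point of $e_i$ equal to the start point of $e_{i+1}$, and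 $t_1<\dots<t_k$; it visits the endpoints of its edges and has length $t_k$. *)

theory Defs
  imports Complex_Main
begin

(* Words are lists of natural numbers; positions are 0-based internally
   (paper index i corresponds to list index i-1). The alphabet of n symbols
   is {0..<n}; vertex v_a is identified with the symbol a. *)

definition proj :: "nat set \<Rightarrow> nat list \<Rightarrow> nat list" where
  "proj S w = filter (\<lambda>a. a \<in> S) w"

definition alternate :: "nat \<Rightarrow> nat \<Rightarrow> nat list \<Rightarrow> bool" where
  "alternate x y w = (\<exists>k. proj {x, y} w = concat (replicate k [x, y])
                         \<or> proj {x, y} w = concat (replicate k [x, y]) @ [x]
                         \<or> proj {x, y} w = concat (replicate k [y, x])
                         \<or> proj {x, y} w = concat (replicate k [y, x]) @ [y])"

definition Gedges :: "nat \<Rightarrow> nat list \<Rightarrow> nat set set" where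
  "Gedges n w = {{x, y} | x y. x < n \<and> y < n \<and> x \<noteq> y \<and> alternate x y w}"

definition is_next :: "nat list \<Rightarrow> nat \<Rightarrow> nat \<Rightarrow> bool" where
  "is_next w s j = (s < j \<and> j < length w \<and> w ! j \<in> set (take (j - s) (drop s w)))"

inductive_set startpts :: "nat list \<Rightarrow> nat set" for w where
  first: "0 \<in> startpts w"
| step: "s \<in> startpts w \<Longrightarrow> \<exists>j. is_next w s j \<Longrightarrow>
         (LEAST j. is_next w s j) \<in> startpts w"

(* S_1 < ... < S_T, 0-based positions *)
definition starts :: "nat list \<Rightarrow> nat list" where
  "starts w = sorted_list_of_set (startpts w)"

definition numT :: "nat list \<Rightarrow> nat" where
  "numT w = length (starts w)"

(* t-th timestep factor, t \<in> {1..T} *)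
definition factor :: "nat list \<Rightarrow> nat \<Rightarrow> nat list" where
  "factor w t = (if t < numT w
     then take (starts w ! t - starts w ! (t - 1)) (drop (starts w ! (t - 1)) w)
     else drop (starts w ! (numT w - 1)) w)"

definition TEdges :: "nat \<Rightarrow> nat list \<Rightarrow> nat \<Rightarrow> nat set set" where
  "TEdges n w t = {e \<in> Gedges n w. \<exists>a \<in> e. a \<in> set (factor w t)}"

definition is_path_graph :: "nat set \<Rightarrow> nat set set \<Rightarrow> bool" where
  "is_path_graph V E = (\<exists>p. distinct p \<and> set p = V \<and>
       E = {{p ! i, p ! (i + 1)} | i. i + 1 < length p})"

definition temporal_path_graph :: "nat \<Rightarrow> nat list \<Rightarrow> bool" where
  "temporal_path_graph n w =
     is_path_graph {0..<n} (\<Union>t\<in>{1..numT w}. TEdges n w t)"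

(* temporal walk given by its vertex sequence vs = v_0..v_k and times ts = t_1..t_k (k \<ge> 1):
   edge i is {v_(i-1), v_i} \<in> E_(t_i), times strictly increasing *)
definition temporal_walk :: "nat \<Rightarrow> nat list \<Rightarrow> nat list \<Rightarrow> nat list \<Rightarrow> bool" where
  "temporal_walk n w vs ts =
     (ts \<noteq> [] \<and> length vs = length ts + 1 \<and> sorted_wrt (<) ts \<and>
      (\<forall>i < length ts. ts ! i \<in> {1..numT w} \<and> {vs ! i, vs ! (i + 1)} \<in> TEdges n w (ts ! i)))"

end

theory Submission
  imports Defs
begin

text \<open>
  The word consists of 2n copies of the block 0 1 0 2 1 3 2 4 3 ... (n-1) (n-2) (n-1) of length
  2n. Exactly the letters v and v+1 alternate in it, so TG(w) is the path 0 - 1 - ... - (n-1).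
  Every five consecutive letters contain a repetition, whereas no letter is repeated at distance 1
  and no letter occurs three times within 2n consecutive positions; hence every timestep factor
  other than the first and the last has length 3 or 4. For a temporal walk, pick in the factor of
  each step a position carrying an endpoint of the edge used: these positions advance by at least
  3 per step. Inside a block, however, the edge {v, v+1} only occurs around position 2v, and the
  walk advances by one vertex per step, so the positions advance by only about 2 per step. Hence
  at most 8 steps fall into one block; a walk visiting all n vertices has at least n - 1 steps, so
  it reaches block (n - 9)/8, i.e. timestep about n^2/16.
\<close>

section \<open>Start points and timestep factors\<close>

lemma in_set_take_drop_iff:
  "a \<in> set (take k (drop s w)) \<longleftrightarrow> (\<exists>i. s \<le> i \<and> i < s + k \<and> i < length w \<and> w ! i = a)"
proof
  assume "a \<in> set (take k (drop s w))"
  then obtain m where "m < k" "s + m < length w" "w ! (s + m) = a"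
    by (auto simp: in_set_conv_nth)
  then show "\<exists>i. s \<le> i \<and> i < s + k \<and> i < length w \<and> w ! i = a"
    by (intro exI[of _ "s + m"]) auto
next
  assume "\<exists>i. s \<le> i \<and> i < s + k \<and> i < length w \<and> w ! i = a"
  then obtain i where "s \<le> i" "i < s + k" "i < length w" "w ! i = a" by blast
  then show "a \<in> set (take k (drop s w))"
    by (auto simp: in_set_conv_nth intro!: exI[of _ "i - s"])
qed

lemma in_set_drop_iff: "a \<in> set (drop s w) \<longleftrightarrow> (\<exists>i. s \<le> i \<and> i < length w \<and> w ! i = a)"
  using in_set_take_drop_iff[of a "length w" s w] by auto

lemma is_next_iff:
  "is_next w s j \<longleftrightarrow> s < j \<and> j < length w \<and> (\<exists>i. s \<le> i \<and> i < j \<and> w ! i = w ! j)"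
  unfolding is_next_def in_set_take_drop_iff by auto

definition next_start :: "nat list \<Rightarrow> nat \<Rightarrow> nat" where
  "next_start w s = (LEAST j. is_next w s j)"

lemma next_start:
  assumes "is_next w s j"
  shows is_next_next_start: "is_next w s (next_start w s)"
    and next_start_le: "next_start w s \<le> j"
  using assms unfolding next_start_def by (auto intro: LeastI Least_le)

lemma startpts_next_start: "s \<in> startpts w \<Longrightarrow> is_next w s j \<Longrightarrow> next_start w s \<in> startpts w"
  unfolding next_start_def by (rule startpts.step) auto

lemma startpts_subset: "startpts w \<subseteq> insert 0 {..<length w}"
proof
  fix s assume "s \<in> startpts w"
  then show "s \<in> insert 0 {..<length w}"
  proof (induction rule: startpts.induct)
    case (step s)
    then obtain j where "is_next w s j" by blast
    then show ?case
      using is_next_next_start unfolding next_start_def is_next_def by fastforce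
  qed simp
qed

lemma finite_startpts: "finite (startpts w)"
  using startpts_subset finite_subset by blast

lemma next_start_le_startpts:
  "s' \<in> startpts w \<Longrightarrow> s \<in> startpts w \<Longrightarrow> s < s' \<Longrightarrow>
   (\<exists>j. is_next w s j) \<and> next_start w s \<le> s'"
proof (induction s' arbitrary: s rule: less_induct)
  case (less s')
  from less.prems(1) show ?case
  proof (cases rule: startpts.cases)
    case first
    then show ?thesis using less.prems by simp
  next
    case (step s0)
    then have s': "s' = next_start w s0" and nxt: "is_next w s0 s'"
      using is_next_next_start unfolding next_start_def by auto
    then have "s0 < s'" unfolding is_next_def by simp
    consider "s = s0" | "s < s0" | "s0 < s" by linarith
    then show ?thesis
    proof cases
      case 1
      then show ?thesis using nxt s' by auto
    next
      case 2
      then show ?thesis using less.IH[OF \<open>s0 < s'\<close> step(2) less.prems(2)] \<open>s0 < s'\<close> by auto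
    next
      case 3
      then show ?thesis using less.IH[OF less.prems(3,2) step(2)] s' less.prems(3) by simp
    qed
  qed
qed

lemma set_starts: "set (starts w) = startpts w"
  by (simp add: starts_def finite_startpts)

lemma sorted_starts: "sorted_wrt (<) (starts w)"
  unfolding starts_def by (simp add: sorted_list_of_set.strict_sorted_key_list_of_set)

lemma starts_nth_mem: "t < numT w \<Longrightarrow> starts w ! t \<in> startpts w"
  using set_starts numT_def by (metis nth_mem)

lemma starts_strict_mono: "t < t' \<Longrightarrow> t' < numT w \<Longrightarrow> starts w ! t < starts w ! t'"
  using sorted_starts numT_def sorted_wrt_nth_less by metis

lemma starts_mono: "t \<le> t' \<Longrightarrow> t' < numT w \<Longrightarrow> starts w ! t \<le> starts w ! t'"
  using starts_strict_mono by (metis le_eq_less_or_eq order.strict_implies_order)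

lemma startpts_index: "s \<in> startpts w \<Longrightarrow> \<exists>t<numT w. starts w ! t = s"
  using set_starts numT_def by (metis in_set_conv_nth)

lemma starts_0: "0 < numT w" "starts w ! 0 = 0"
proof -
  obtain t where t: "t < numT w" "starts w ! t = 0"
    using startpts_index startpts.first by blast
  moreover have "t = 0"
    using starts_strict_mono[of 0 t w] t by (metis gr_implies_not0 not_gr0)
  ultimately show "0 < numT w" "starts w ! 0 = 0" by auto
qed

lemma next_start_in_starts:
  assumes "t < numT w" "is_next w (starts w ! t) j"
  shows "Suc t < numT w \<and> starts w ! Suc t = next_start w (starts w ! t)"
proof -
  let ?s = "starts w ! t"
  obtain t' where t': "t' < numT w" "starts w ! t' = next_start w ?s"
    using startpts_index[OF startpts_next_start[OF starts_nth_mem[OF assms(1)] assms(2)]] by blast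
  have "?s < starts w ! t'"
    using is_next_next_start[OF assms(2)] t' unfolding is_next_def by simp
  then have "\<not> t' \<le> t" using starts_mono[of t' t w] assms(1) by auto
  then have "Suc t < numT w" "Suc t \<le> t'" using t' by auto
  then have "starts w ! Suc t \<le> next_start w ?s" using t' starts_mono[of "Suc t" t' w] by simp
  moreover have "next_start w ?s \<le> starts w ! Suc t"
    using next_start_le_startpts[OF starts_nth_mem[OF \<open>Suc t < numT w\<close>] starts_nth_mem[OF assms(1)]]
      starts_strict_mono[OF lessI \<open>Suc t < numT w\<close>] by blast
  ultimately show ?thesis using \<open>Suc t < numT w\<close> by simp
qed

lemma starts_Suc:
  assumes "Suc t < numT w"
  shows "is_next w (starts w ! t) (starts w ! Suc t)"
    and "starts w ! Suc t = next_start w (starts w ! t)"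
proof -
  obtain j where "is_next w (starts w ! t) j"
    using next_start_le_startpts starts_nth_mem starts_strict_mono assms by (meson lessI Suc_lessD)
  then show "starts w ! Suc t = next_start w (starts w ! t)"
    and "is_next w (starts w ! t) (starts w ! Suc t)"
    using next_start_in_starts is_next_next_start assms by (metis Suc_lessD)+
qed

lemma no_next_after_last_start: "\<not> is_next w (starts w ! (numT w - 1)) j"
proof
  assume "is_next w (starts w ! (numT w - 1)) j"
  then have "Suc (numT w - 1) < numT w"
    using next_start_in_starts starts_0(1) by (metis diff_less zero_less_one)
  then show False by simp
qed

text \<open>Timestep t (counted from 1) occupies the positions from factor_start w t below factor_end w t.\<close>

definition factor_start :: "nat list \<Rightarrow> nat \<Rightarrow> nat" where
  "factor_start w t = starts w ! (t - 1)"

definition factor_end :: "nat list \<Rightarrow> nat \<Rightarrow> nat" where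
  "factor_end w t = (if t < numT w then starts w ! t else length w)"

lemma factor_end_le_length: "factor_end w t \<le> length w"
proof (cases "0 < t \<and> t < numT w")
  case True
  then have "is_next w (starts w ! (t - 1)) (starts w ! t)" using starts_Suc[of "t - 1" w] by simp
  then show ?thesis using True unfolding factor_end_def is_next_def by simp
next
  case False
  then show ?thesis unfolding factor_end_def using starts_0 by auto
qed

lemma mem_factor_iff:
  assumes "1 \<le> t" "t \<le> numT w"
  shows "a \<in> set (factor w t) \<longleftrightarrow> (\<exists>p. factor_start w t \<le> p \<and> p < factor_end w t \<and> w ! p = a)"
proof (cases "t < numT w")
  case True
  have "starts w ! t \<le> length w" using factor_end_le_length[of w t] True by (simp add: factor_end_def)
  moreover have "factor w t = take (starts w ! t - starts w ! (t - 1)) (drop (starts w ! (t - 1)) w)"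
    using True by (simp add: factor_def)
  moreover have "starts w ! (t - 1) < starts w ! t" using starts_strict_mono True assms(1) by simp
  ultimately show ?thesis
    using True unfolding factor_start_def factor_end_def by (auto simp: in_set_take_drop_iff)
next
  case False
  then show ?thesis using assms
    unfolding factor_def factor_start_def factor_end_def by (auto simp: in_set_drop_iff)
qed

lemma factor_covers:
  assumes "p < length w"
  shows "\<exists>t. 1 \<le> t \<and> t \<le> numT w \<and> factor_start w t \<le> p \<and> p < factor_end w t"
proof -
  define T where "T = {t. t < numT w \<and> starts w ! t \<le> p}"
  have fin: "finite T" unfolding T_def by simp
  have "0 \<in> T" using starts_0[of w] unfolding T_def by simp
  then have "Max T \<in> T" using Max_in[OF fin] by blast
  then have t: "Max T < numT w" "starts w ! Max T \<le> p" unfolding T_def by auto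
  have "p < factor_end w (Suc (Max T))"
  proof (cases "Suc (Max T) < numT w")
    case True
    then have "Suc (Max T) \<notin> T" using Max_ge[OF fin] by fastforce
    then show ?thesis using True unfolding T_def factor_end_def by auto
  next
    case False
    then show ?thesis using assms unfolding factor_end_def by simp
  qed
  then show ?thesis using t unfolding factor_start_def by (intro exI[of _ "Suc (Max T)"]) auto
qed

section \<open>Lengths of timesteps\<close>

definition repeat_in_windows :: "nat \<Rightarrow> nat list \<Rightarrow> bool" where
  "repeat_in_windows d w \<longleftrightarrow>
     (\<forall>p. p + d < length w \<longrightarrow> (\<exists>i j. p \<le> i \<and> i < j \<and> j \<le> p + d \<and> w ! i = w ! j))"

definition no_quick_recurrence :: "nat \<Rightarrow> nat list \<Rightarrow> bool" where
  "no_quick_recurrence d w \<longleftrightarrow>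
     (\<forall>i s. i < s \<longrightarrow> s \<le> i + d \<longrightarrow> s + 2 < length w \<longrightarrow> w ! i = w ! s \<longrightarrow> w ! (s + 2) \<noteq> w ! s)"

lemma is_next_in_window:
  assumes "repeat_in_windows d w" "s + d < length w"
  shows "\<exists>j \<le> s + d. is_next w s j"
proof -
  obtain i j where "s \<le> i" "i < j" "j \<le> s + d" "w ! i = w ! j"
    using assms unfolding repeat_in_windows_def by blast
  then show ?thesis using assms(2) unfolding is_next_iff by (intro exI[of _ j]) auto
qed

lemma next_start_le_add:
  assumes "repeat_in_windows d w" "is_next w s j"
  shows "next_start w s \<le> s + d"
proof (cases "s + d < length w")
  case True
  then show ?thesis using is_next_in_window[OF assms(1)] next_start_le by (meson order.trans)
next
  case False
  then show ?thesis using is_next_next_start[OF assms(2)] unfolding is_next_def by simp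
qed

lemma factor_start_Suc: "t < numT w \<Longrightarrow> factor_start w (Suc t) = factor_end w t"
  unfolding factor_start_def factor_end_def by simp

lemma factor_end_le_start_add:
  assumes "repeat_in_windows d w" "1 \<le> t" "t \<le> numT w"
  shows "factor_end w t \<le> factor_start w t + d"
proof (cases "t < numT w")
  case True
  then show ?thesis
    using starts_Suc[of "t - 1" w] next_start_le_add[OF assms(1)] assms(2)
    unfolding factor_end_def factor_start_def by simp
next
  case False
  then have "t = numT w" using assms by simp
  then have "\<not> factor_start w t + d < length w"
    using is_next_in_window[OF assms(1)] no_next_after_last_start unfolding factor_start_def by blast
  then show ?thesis using \<open>t = numT w\<close> unfolding factor_end_def by simp
qed

lemma factor_end_le_mult:
  assumes "repeat_in_windows d w"
  shows "1 \<le> t \<Longrightarrow> t \<le> numT w \<Longrightarrow> factor_end w t \<le> d * t"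
proof (induction t)
  case (Suc t)
  show ?case
  proof (cases "t = 0")
    case True
    then show ?thesis
      using factor_end_le_start_add[OF assms, of 1] Suc.prems starts_0 by (simp add: factor_start_def)
  next
    case False
    then have "factor_end w t \<le> d * t" using Suc by simp
    then show ?thesis
      using factor_end_le_start_add[OF assms, of "Suc t"] factor_start_Suc[of t w] Suc.prems by simp
  qed
qed simp

text \<open>
  The letter at a start point s > 0 already occurred within the d positions before s, so it does
  not recur at s + 2; together with distinct_adj this excludes timesteps of length 1 and 2.
\<close>

lemma factor_length_ge:
  assumes "repeat_in_windows d w" "distinct_adj w" "no_quick_recurrence d w"
    and "2 \<le> t" "t < numT w"
  shows "factor_start w t + 3 \<le> factor_end w t"
proof -
  define s0 s s' where "s0 = starts w ! (t - 2)" and "s = starts w ! (t - 1)" and "s' = starts w ! t"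
  have "Suc (t - 2) = t - 1" using assms(4) by simp
  then have "is_next w s0 s" "s = next_start w s0"
    using starts_Suc[of "t - 2" w] assms(5) unfolding s0_def s_def by auto
  then have "s \<le> s0 + d" using next_start_le_add[OF assms(1)] by simp
  obtain i where "s0 \<le> i" "i < s" "w ! i = w ! s"
    using \<open>is_next w s0 s\<close> unfolding is_next_iff by blast
  then have no_return: "w ! (s + 2) \<noteq> w ! s" if "s + 2 < length w"
    using assms(3) \<open>s \<le> s0 + d\<close> that unfolding no_quick_recurrence_def by simp
  have "is_next w s s'"
    using starts_Suc[of "t - 1" w] assms(4,5) unfolding s_def s'_def by simp
  then obtain i' where rep: "s \<le> i'" "i' < s'" "w ! i' = w ! s'" and "s' < length w"
    unfolding is_next_iff by blast
  have "\<not> s' \<le> s + 2"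
  proof
    assume "s' \<le> s + 2"
    then have "s' = Suc s \<or> s' = Suc (Suc s)" "i' = s \<or> i' = Suc s" "i' < s'" using rep by linarith+
    then show False
      using distinct_adj_nth[OF assms(2), of s] distinct_adj_nth[OF assms(2), of "Suc s"]
        no_return rep(3) \<open>s' < length w\<close> by auto
  qed
  then show ?thesis using assms(5) unfolding factor_start_def factor_end_def s_def s'_def by simp
qed

lemma factor_gap:
  assumes "repeat_in_windows d w" "distinct_adj w" "no_quick_recurrence d w"
    and "1 \<le> t" "t < t'" "t' \<le> numT w"
  shows "factor_end w t + 3 * (t' - t - 1) \<le> factor_start w t'"
  using assms(5,6)
proof (induction t')
  case (Suc t')
  show ?case
  proof (cases "t = t'")
    case True
    then show ?thesis using factor_start_Suc Suc.prems by simp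
  next
    case False
    then have "factor_end w t + 3 * (t' - t - 1) \<le> factor_start w t'" using Suc by simp
    moreover have "factor_start w t' + 3 \<le> factor_end w t'"
      using factor_length_ge[OF assms(1-3)] False Suc.prems assms(4) by simp
    ultimately show ?thesis using factor_start_Suc[of t' w] False Suc.prems by simp
  qed
qed simp

lemma factor_positions_spread:
  assumes "repeat_in_windows d w" "distinct_adj w" "no_quick_recurrence d w"
    and "1 \<le> t" "t < t'" "t' \<le> numT w" "p < factor_end w t" "factor_start w t' \<le> p'"
  shows "p + 3 * (t' - t) \<le> p' + 2"
  using factor_gap[OF assms(1-6)] assms(5,7,8) by linarith

section \<open>The word\<close>

text \<open>
  The block 0 1 0 2 1 3 2 ... (n-1) (n-2) (n-1) of length 2n, indexed from 0: letter x occurs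
  exactly at the positions first_occ n x and second_occ n x.
\<close>

definition block_letter :: "nat \<Rightarrow> nat \<Rightarrow> nat" where
  "block_letter n q = (if q = 0 then 0 else if q = 2 * n - 1 then n - 1
                       else if odd q then (q + 1) div 2 else (q - 2) div 2)"

definition first_occ :: "nat \<Rightarrow> nat \<Rightarrow> nat" where
  "first_occ n x = (if x = 0 then 0 else if x = n - 1 then 2 * n - 3 else 2 * x - 1)"

definition second_occ :: "nat \<Rightarrow> nat \<Rightarrow> nat" where
  "second_occ n x = (if x = 0 then 2 else if x = n - 1 then 2 * n - 1 else 2 * x + 2)"

lemma block_letter_eq_iff:
  assumes "4 \<le> n" "q < 2 * n" "x < n"
  shows "block_letter n q = x \<longleftrightarrow> q = first_occ n x \<or> q = second_occ n x"
proof -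
  obtain m where "q = 2 * m \<or> q = Suc (2 * m)" by (metis oddE evenE Suc_eq_plus1)
  then show ?thesis using assms unfolding block_letter_def first_occ_def second_occ_def by auto
qed

lemma block_letter_less: "0 < n \<Longrightarrow> q < 2 * n \<Longrightarrow> block_letter n q < n"
  unfolding block_letter_def by (cases "even q") (auto elim!: oddE evenE)

lemma occ_bounds:
  "4 \<le> n \<Longrightarrow> x < n \<Longrightarrow> first_occ n x + 2 \<le> second_occ n x \<and> second_occ n x \<le> first_occ n x + 3 \<and> second_occ n x < 2 * n"
  unfolding first_occ_def second_occ_def by auto

lemma block_letter_occ:
  assumes "4 \<le> n" "x < n"
  shows "block_letter n (first_occ n x) = x" "block_letter n (second_occ n x) = x"
proof -
  have "first_occ n x < 2 * n" "second_occ n x < 2 * n" using occ_bounds[OF assms] by linarith+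
  then show "block_letter n (first_occ n x) = x" "block_letter n (second_occ n x) = x"
    using block_letter_eq_iff[OF assms(1) _ assms(2)] by blast+
qed

lemma block_letter_pos:
  "q < 2 * n \<Longrightarrow> block_letter n q = x \<Longrightarrow> 2 * x \<le> q + 1 \<and> q \<le> 2 * x + 2"
  unfolding block_letter_def by (cases "even q") (auto elim!: oddE evenE)

lemma mod_add_if: "(q::nat) < N \<Longrightarrow> j \<le> N \<Longrightarrow> (q + j) mod N = (if q + j < N then q + j else q + j - N)"
  by (auto simp: mod_if)

lemma block_letter_adjacent:
  "4 \<le> n \<Longrightarrow> q < 2 * n \<Longrightarrow> block_letter n ((q + 1) mod (2 * n)) \<noteq> block_letter n q"
  unfolding block_letter_def mod_add_if by (cases "even q") (auto elim!: oddE evenE)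

lemma occ_in_window:
  assumes "4 \<le> n" "q < 2 * n"
  shows "\<exists>a b x. a < b \<and> b \<le> 4 \<and> x < n \<and>
    (q + a) mod (2 * n) \<in> {first_occ n x, second_occ n x} \<and> (q + b) mod (2 * n) \<in> {first_occ n x, second_occ n x}"
proof -
  have witness: "\<exists>a b x. a < b \<and> b \<le> 4 \<and> x < n \<and>
    (q + a) mod (2 * n) \<in> {first_occ n x, second_occ n x} \<and> (q + b) mod (2 * n) \<in> {first_occ n x, second_occ n x}"
    if "a < b" "b \<le> 4" "x < n" "(q + a) mod (2 * n) \<in> {first_occ n x, second_occ n x}"
      "(q + b) mod (2 * n) \<in> {first_occ n x, second_occ n x}" for a b x
    using that by blast
  consider "q = 0" | y where "q = 2 * y + 1" "y + 2 < n" | y where "q = 2 * y + 2" "y + 3 < n"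
    | "q = 2 * n - 4" | "q = 2 * n - 3" | "q = 2 * n - 2" | "q = 2 * n - 1"
  proof -
    obtain y where "q = 2 * y \<or> q = 2 * y + 1" by (metis oddE evenE)
    then consider "q = 2 * y + 1" "y + 2 < n" | "q = 2 * y" "y = 0"
      | "q = 2 * (y - 1) + 2" "y - 1 + 3 < n" "0 < y" | "q + 4 \<ge> 2 * n" by fastforce
    then show ?thesis
    proof cases
      case 4
      then consider "q = 2 * n - 4" | "q = 2 * n - 3" | "q = 2 * n - 2" | "q = 2 * n - 1" using assms by linarith
      then show ?thesis using that by metis
    qed (use that in auto)
  qed
  then show ?thesis
  proof cases
    case 1 then show ?thesis using assms by (intro witness[of 0 2 0]) (auto simp: first_occ_def second_occ_def)
  next
    case (2 y) then show ?thesis using assms by (intro witness[of 0 3 "y + 1"]) (auto simp: first_occ_def second_occ_def)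
  next
    case (3 y) then show ?thesis using assms by (intro witness[of 1 4 "y + 2"]) (auto simp: first_occ_def second_occ_def)
  next
    case 4 then show ?thesis using assms by (intro witness[of 1 3 "n - 1"]) (auto simp: first_occ_def second_occ_def)
  next
    case 5 then show ?thesis using assms by (intro witness[of 0 2 "n - 1"]) (auto simp: first_occ_def second_occ_def)
  next
    case 6 then show ?thesis using assms mod_add_if[of q "2 * n" 2] mod_add_if[of q "2 * n" 4]
      by (intro witness[of 2 4 0]) (auto simp: first_occ_def second_occ_def)
  next
    case 7 then show ?thesis using assms mod_add_if[of q "2 * n" 1] mod_add_if[of q "2 * n" 3]
      by (intro witness[of 1 3 0]) (auto simp: first_occ_def second_occ_def)
  qed
qed

definition hard_word :: "nat \<Rightarrow> nat list" where
  "hard_word n = map (\<lambda>p. block_letter n (p mod (2 * n))) [0..<4 * n ^ 2]"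

lemma length_hard_word: "length (hard_word n) = 4 * n ^ 2"
  by (simp add: hard_word_def)

lemma hard_word_nth: "p < 4 * n ^ 2 \<Longrightarrow> hard_word n ! p = block_letter n (p mod (2 * n))"
  by (simp add: hard_word_def)

lemma set_hard_word: "0 < n \<Longrightarrow> set (hard_word n) \<subseteq> {0..<n}"
  unfolding hard_word_def using block_letter_less by auto

lemma hard_word_nth_add:
  "p + j < 4 * n ^ 2 \<Longrightarrow> hard_word n ! (p + j) = block_letter n ((p mod (2 * n) + j) mod (2 * n))"
  by (simp add: hard_word_nth mod_add_left_eq)

lemma hard_word_nth_eq_iff:
  assumes "4 \<le> n" "p < 4 * n ^ 2" "x < n"
  shows "hard_word n ! p = x \<longleftrightarrow> p mod (2 * n) \<in> {first_occ n x, second_occ n x}"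
  using block_letter_eq_iff[OF assms(1) _ assms(3)] assms by (simp add: hard_word_nth)

lemma repeat_in_windows_hard_word:
  assumes "4 \<le> n"
  shows "repeat_in_windows 4 (hard_word n)"
  unfolding repeat_in_windows_def length_hard_word
proof (intro allI impI)
  fix p assume p: "p + 4 < 4 * n ^ 2"
  obtain a b x where "a < b" "b \<le> 4" "x < n"
    "(p mod (2 * n) + a) mod (2 * n) \<in> {first_occ n x, second_occ n x}"
    "(p mod (2 * n) + b) mod (2 * n) \<in> {first_occ n x, second_occ n x}"
    using occ_in_window[OF assms, of "p mod (2 * n)"] assms by auto
  then have "hard_word n ! (p + a) = x" "hard_word n ! (p + b) = x"
    using hard_word_nth_eq_iff[OF assms] p by (simp_all add: mod_add_left_eq)
  then show "\<exists>i j. p \<le> i \<and> i < j \<and> j \<le> p + 4 \<and> hard_word n ! i = hard_word n ! j"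
    using \<open>a < b\<close> \<open>b \<le> 4\<close> by (intro exI[of _ "p + a"] exI[of _ "p + b"]) auto
qed

lemma distinct_adj_hard_word:
  assumes "4 \<le> n"
  shows "distinct_adj (hard_word n)"
  unfolding distinct_adj_conv_nth length_hard_word
proof (intro allI impI)
  fix p assume "Suc p < 4 * n ^ 2"
  then show "hard_word n ! p \<noteq> hard_word n ! Suc p"
    using hard_word_nth_add[of p 1 n] hard_word_nth[of p n]
      block_letter_adjacent[OF assms, of "p mod (2 * n)"] assms by auto
qed

lemma mod_neq_if_close: "(p::nat) < p' \<Longrightarrow> p' < p + N \<Longrightarrow> p mod N \<noteq> p' mod N"
  using mod_eq_dvd_iff_nat[of p p' N] dvd_imp_le[of N "p' - p"] by auto

lemma hard_word_no_triple:
  assumes "4 \<le> n" "p1 < p2" "p2 < p3" "p3 < p1 + 2 * n" "p3 < 4 * n ^ 2"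
    and "hard_word n ! p1 = hard_word n ! p3" "hard_word n ! p2 = hard_word n ! p3"
  shows False
proof -
  define x where "x = hard_word n ! p3"
  have "x < n" using assms(1,5) block_letter_less unfolding x_def by (simp add: hard_word_nth)
  then have "p1 mod (2 * n) \<in> {first_occ n x, second_occ n x}" "p2 mod (2 * n) \<in> {first_occ n x, second_occ n x}"
    "p3 mod (2 * n) \<in> {first_occ n x, second_occ n x}"
    using hard_word_nth_eq_iff[OF assms(1)] assms unfolding x_def by auto
  moreover have "p1 mod (2 * n) \<noteq> p2 mod (2 * n)" "p1 mod (2 * n) \<noteq> p3 mod (2 * n)" "p2 mod (2 * n) \<noteq> p3 mod (2 * n)"
    using mod_neq_if_close assms(2-4) by simp_all
  ultimately show False by auto
qed

lemma no_quick_recurrence_hard_word: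
  assumes "4 \<le> n"
  shows "no_quick_recurrence 4 (hard_word n)"
  unfolding no_quick_recurrence_def length_hard_word
proof (intro allI impI notI)
  fix i s assume "i < s" "s \<le> i + 4" "s + 2 < 4 * n ^ 2" "hard_word n ! i = hard_word n ! s"
    and "hard_word n ! (s + 2) = hard_word n ! s"
  moreover have "s + 2 < i + 2 * n" using \<open>s \<le> i + 4\<close> assms by linarith
  ultimately show False using hard_word_no_triple[OF assms(1), of i s "s + 2"] by linarith
qed

lemma map_mod_upt_mult:
  fixes f :: "nat \<Rightarrow> 'a"
  shows "map (\<lambda>p. f (p mod N)) [0..<m * N] = concat (replicate m (map f [0..<N]))"
proof (induction m)
  case (Suc m)
  have "Suc m * N = m * N + N" by simp
  then have "[0..<Suc m * N] = [0..<m * N] @ [m * N..<m * N + N]"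
    using upt_add_eq_append[of 0 "m * N" N] by (simp add: add.commute)
  moreover have "map (\<lambda>p. f (p mod N)) [m * N..<m * N + N] = map f [0..<N]"
    by (rule nth_equalityI) simp_all
  moreover have "concat (replicate (Suc k) xs) = concat (replicate k xs) @ xs" for k and xs :: "'a list"
    by (induction k) simp_all
  ultimately show ?case using Suc by (simp del: replicate_Suc)
qed simp

lemma proj_hard_word:
  "0 < n \<Longrightarrow>
   proj S (hard_word n) = concat (replicate (2 * n) (map (block_letter n) (filter (\<lambda>q. block_letter n q \<in> S) [0..<2 * n])))"
  using map_mod_upt_mult[where N = "2 * n" and f = "block_letter n" and m = "2 * n"]
  unfolding proj_def hard_word_def by (simp add: power2_eq_square filter_concat filter_map comp_def)

lemma filter_upt_eq:
  assumes "sorted_wrt (<) cs" "set cs = {q. q < N \<and> P q}"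
  shows "filter P [0..<N] = cs"
proof (rule sorted_distinct_set_unique)
  show "sorted cs" "distinct cs" using assms(1) strict_sorted_iff by blast+
  show "sorted (filter P [0..<N])" using sorted_wrt_filter sorted_upt by blast
  show "distinct (filter P [0..<N])" by simp
  show "set (filter P [0..<N]) = set cs" using assms(2) by auto
qed

lemma proj_hard_word_pair:
  assumes "4 \<le> n" "x < n" "y < n" and sorted: "sorted_wrt (<) [a, b, c, d]"
    and occs: "{a, b, c, d} = {first_occ n x, second_occ n x, first_occ n y, second_occ n y}"
  shows "proj {x, y} (hard_word n) = concat (replicate (2 * n) (map (block_letter n) [a, b, c, d]))"
proof -
  have "q < 2 * n \<and> block_letter n q \<in> {x, y} \<longleftrightarrow> q \<in> {a, b, c, d}" for q
    using block_letter_eq_iff[OF assms(1) _ assms(2), of q] block_letter_eq_iff[OF assms(1) _ assms(3), of q]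
      occ_bounds[OF assms(1,2)] occ_bounds[OF assms(1,3)] unfolding occs by auto
  then have "filter (\<lambda>q. block_letter n q \<in> {x, y}) [0..<2 * n] = [a, b, c, d]"
    by (intro filter_upt_eq[OF sorted]) auto
  then show ?thesis using proj_hard_word[of n "{x, y}"] assms(1) by simp
qed

lemma occ_interleave_Suc:
  "4 \<le> n \<Longrightarrow> Suc v < n \<Longrightarrow>
   first_occ n v < first_occ n (Suc v) \<and> first_occ n (Suc v) < second_occ n v \<and> second_occ n v < second_occ n (Suc v)"
  unfolding first_occ_def second_occ_def by auto

lemma occ_separate_far:
  "4 \<le> n \<Longrightarrow> x + 2 \<le> y \<Longrightarrow> y < n \<Longrightarrow> second_occ n x < first_occ n y"
  unfolding first_occ_def second_occ_def by auto

lemma concat_replicate_double: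
  "concat (replicate k [a, b, a, b]) = concat (replicate (2 * k) [a, b])"
  by (induction k) auto

lemma alternate_commute: "alternate x y w \<longleftrightarrow> alternate y x w"
  unfolding alternate_def insert_commute[of x y] by blast

lemma alternate_Suc_hard_word:
  assumes "4 \<le> n" "Suc v < n"
  shows "alternate v (Suc v) (hard_word n)"
proof -
  have "proj {v, Suc v} (hard_word n) = concat (replicate (2 * n) [v, Suc v, v, Suc v])"
    using proj_hard_word_pair[OF assms(1) _ assms(2),
        of v "first_occ n v" "first_occ n (Suc v)" "second_occ n v" "second_occ n (Suc v)"]
      occ_interleave_Suc[OF assms] block_letter_occ[OF assms(1), of v] block_letter_occ[OF assms(1,2)] assms(2)
    by (auto simp: insert_commute)
  also have "\<dots> = concat (replicate (2 * (2 * n)) [v, Suc v])"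
    using concat_replicate_double .
  finally show ?thesis unfolding alternate_def by blast
qed

lemma not_alternate_if_proj_Cons_Cons:
  assumes "x \<noteq> y" "proj {x, y} w = c # c # r"
  shows "\<not> alternate x y w"
proof -
  have "concat (replicate k [a, b]) \<noteq> c # c # r \<and> concat (replicate k [a, b]) @ [a] \<noteq> c # c # r"
    if "a \<noteq> b" for a b k
    using that by (cases k) auto
  then show ?thesis using assms unfolding alternate_def by metis
qed

lemma not_alternate_far_hard_word:
  assumes "4 \<le> n" "x + 2 \<le> y" "y < n"
  shows "\<not> alternate x y (hard_word n)"
proof -
  have "proj {x, y} (hard_word n) = concat (replicate (2 * n) [x, x, y, y])"
    using proj_hard_word_pair[OF assms(1) _ assms(3),
        of x "first_occ n x" "second_occ n x" "first_occ n y" "second_occ n y"]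
      occ_separate_far[OF assms] occ_bounds[OF assms(1), of x] occ_bounds[OF assms(1,3)]
      block_letter_occ[OF assms(1), of x] block_letter_occ[OF assms(1,3)] assms(2,3)
    by auto
  also have "\<dots> = x # x # (y # y # concat (replicate (2 * n - 1) [x, x, y, y]))"
    using assms(1) by (cases "2 * n") auto
  finally show ?thesis using not_alternate_if_proj_Cons_Cons assms(2) by simp
qed

lemma Gedges_hard_word:
  assumes "4 \<le> n"
  shows "Gedges n (hard_word n) = {{v, Suc v} | v. Suc v < n}"
proof -
  have alternate_iff: "alternate x y (hard_word n) \<longleftrightarrow> y = Suc x \<or> x = Suc y"
    if xy: "x < n" "y < n" "x \<noteq> y" for x y
  proof -
    consider "y = Suc x" | "x = Suc y" | "x + 2 \<le> y" | "y + 2 \<le> x" using xy(3) by linarith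
    then show ?thesis
    proof cases
      case 1 then show ?thesis using alternate_Suc_hard_word[OF assms, of x] xy by simp
    next
      case 2 then show ?thesis using alternate_Suc_hard_word[OF assms, of y] alternate_commute xy by simp
    next
      case 3 then show ?thesis using not_alternate_far_hard_word[OF assms 3 xy(2)] by simp
    next
      case 4 then show ?thesis using not_alternate_far_hard_word[OF assms 4 xy(1)] alternate_commute by simp
    qed
  qed
  show ?thesis
  proof (intro equalityI subsetI)
    fix e assume "e \<in> Gedges n (hard_word n)"
    then obtain x y where e: "e = {x, y}" "x < n" "y < n" "x \<noteq> y" "alternate x y (hard_word n)"
      unfolding Gedges_def by blast
    then consider "y = Suc x" | "x = Suc y" using alternate_iff by blast
    then show "e \<in> {{v, Suc v} | v. Suc v < n}"
    proof cases
      case 1 then show ?thesis using e by blast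
    next
      case 2
      then have "e = {y, Suc y}" using e(1) by (simp add: insert_commute)
      then show ?thesis using 2 e(2) by blast
    qed
  next
    fix e assume "e \<in> {{v, Suc v} | v. Suc v < n}"
    then obtain v where "e = {v, Suc v}" "Suc v < n" by blast
    then show "e \<in> Gedges n (hard_word n)"
      unfolding Gedges_def mem_Collect_eq using alternate_Suc_hard_word[OF assms]
      by (intro exI[of _ v] exI[of _ "Suc v"]) simp
  qed
qed

lemma TEdges_union_hard_word:
  assumes "4 \<le> n"
  shows "(\<Union>t\<in>{1..numT (hard_word n)}. TEdges n (hard_word n) t) = Gedges n (hard_word n)"
proof
  show "Gedges n (hard_word n) \<subseteq> (\<Union>t\<in>{1..numT (hard_word n)}. TEdges n (hard_word n) t)"
  proof
    fix e assume e: "e \<in> Gedges n (hard_word n)"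
    then obtain v where v: "e = {v, Suc v}" "Suc v < n" using Gedges_hard_word[OF assms] by blast
    define p where "p = first_occ n v"
    have "p < 2 * n" "2 * n \<le> 4 * n ^ 2"
      using occ_bounds[OF assms, of v] v(2) unfolding p_def by (auto simp: power2_eq_square)
    then have p: "p < length (hard_word n)" "hard_word n ! p = v"
      using block_letter_occ[OF assms, of v] v(2) by (auto simp: length_hard_word hard_word_nth p_def)
    then obtain t where t: "1 \<le> t" "t \<le> numT (hard_word n)"
      "factor_start (hard_word n) t \<le> p" "p < factor_end (hard_word n) t"
      using factor_covers by blast
    then have "v \<in> set (factor (hard_word n) t)" using p mem_factor_iff by blast
    then show "e \<in> (\<Union>t\<in>{1..numT (hard_word n)}. TEdges n (hard_word n) t)"
      using e v t unfolding TEdges_def by auto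
  qed
qed (auto simp: TEdges_def)

lemma temporal_path_graph_hard_word:
  assumes "4 \<le> n"
  shows "temporal_path_graph n (hard_word n)"
proof -
  have "{{[0..<n] ! i, [0..<n] ! (i + 1)} | i. i + 1 < length [0..<n]} = {{v, Suc v} | v. Suc v < n}"
  proof (intro equalityI subsetI)
    fix e assume "e \<in> {{[0..<n] ! i, [0..<n] ! (i + 1)} | i. i + 1 < length [0..<n]}"
    then obtain i where "e = {[0..<n] ! i, [0..<n] ! (i + 1)}" "i + 1 < n" by auto
    then show "e \<in> {{v, Suc v} | v. Suc v < n}" by (simp del: upt_Suc) blast
  next
    fix e assume "e \<in> {{v, Suc v} | v. Suc v < n}"
    then obtain v where "e = {v, Suc v}" "Suc v < n" by blast
    then show "e \<in> {{[0..<n] ! i, [0..<n] ! (i + 1)} | i. i + 1 < length [0..<n]}"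
      by (intro CollectI exI[of _ v]) (simp del: upt_Suc)
  qed
  then show ?thesis
    unfolding temporal_path_graph_def TEdges_union_hard_word[OF assms] Gedges_hard_word[OF assms]
      is_path_graph_def by (intro exI[of _ "[0..<n]"]) simp
qed

section \<open>Exploring the word takes quadratically many timesteps\<close>

lemma sorted_wrt_less_nth_add:
  fixes xs :: "nat list"
  assumes "sorted_wrt (<) xs" "i \<le> j" "j < length xs"
  shows "xs ! i + (j - i) \<le> xs ! j"
  using assms(2,3)
proof (induction j)
  case (Suc j)
  show ?case
  proof (cases "i = Suc j")
    case False
    then show ?thesis using Suc sorted_wrt_nth_less[OF assms(1), of j "Suc j"] by simp
  qed simp
qed simp

lemma nth_le_add_index_diff:
  fixes xs :: "nat list"
  assumes "\<And>i. Suc i < length xs \<Longrightarrow> xs ! Suc i \<le> xs ! i + 1" "i \<le> j" "j < length xs"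
  shows "xs ! j \<le> xs ! i + (j - i)"
  using assms(2,3)
proof (induction j)
  case (Suc j)
  show ?case
  proof (cases "i = Suc j")
    case False
    then show ?thesis using Suc assms(1)[of j] by simp
  qed simp
qed simp

lemma card_le_if_fibres_close:
  fixes f :: "nat \<Rightarrow> nat"
  assumes "0 < d" "\<And>x. x \<in> A \<Longrightarrow> f x \<le> R"
    and close: "\<And>x y. x \<in> A \<Longrightarrow> y \<in> A \<Longrightarrow> x < y \<Longrightarrow> f x = f y \<Longrightarrow> y < x + d"
  shows "card A \<le> d * (R + 1)"
proof -
  have eq: "x = y" if "x \<in> A" "y \<in> A" "x \<le> y" "f x = f y" "x mod d = y mod d" for x y
  proof (rule ccontr)
    assume "x \<noteq> y"
    then have "x < y" using that(3) by simp
    then have "y < x + d" using close that(1,2,4) by blast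
    moreover have "d dvd y - x" using mod_eq_dvd_iff_nat[OF that(3), of d] that(5)[symmetric] by (rule iffD1)
    ultimately show False using dvd_imp_le[of d "y - x"] \<open>x < y\<close> by linarith
  qed
  have "inj_on (\<lambda>x. (f x, x mod d)) A"
  proof (intro inj_onI)
    fix x y assume "x \<in> A" "y \<in> A" "(f x, x mod d) = (f y, y mod d)"
    then show "x = y" using eq[of x y] eq[of y x] by (cases "x \<le> y") simp_all
  qed
  moreover have "(\<lambda>x. (f x, x mod d)) ` A \<subseteq> {0..R} \<times> {0..<d}"
    using assms(1,2) by auto
  ultimately have "card A \<le> card ({0..R} \<times> {0..<d})"
    using card_inj_on_le by blast
  then show ?thesis by (simp add: card_cartesian_product mult.commute)
qed

lemma temporal_walk_positions:
  assumes "temporal_walk n w vs ts"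
  obtains P where "\<And>i. i < length ts \<Longrightarrow>
    w ! P i \<in> {vs ! i, vs ! Suc i} \<and> factor_start w (ts ! i) \<le> P i \<and> P i < factor_end w (ts ! i)"
proof -
  have "\<exists>p. w ! p \<in> {vs ! i, vs ! Suc i} \<and> factor_start w (ts ! i) \<le> p \<and> p < factor_end w (ts ! i)"
    if "i < length ts" for i
  proof -
    have t: "1 \<le> ts ! i" "ts ! i \<le> numT w" and "{vs ! i, vs ! Suc i} \<in> TEdges n w (ts ! i)"
      using assms that unfolding temporal_walk_def by auto
    then obtain x where "x \<in> {vs ! i, vs ! Suc i}" "x \<in> set (factor w (ts ! i))"
      unfolding TEdges_def by blast
    then show ?thesis using mem_factor_iff[OF t] by blast
  qed
  then show ?thesis using that by metis
qed

lemma hard_word_walk_step: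
  assumes "4 \<le> n" "temporal_walk n (hard_word n) vs ts" "i < length ts"
  shows "vs ! Suc i = Suc (vs ! i) \<or> vs ! i = Suc (vs ! Suc i)"
proof -
  have "{vs ! i, vs ! Suc i} \<in> Gedges n (hard_word n)"
    using assms(2,3) unfolding temporal_walk_def TEdges_def by auto
  then show ?thesis unfolding Gedges_hard_word[OF assms(1)] by (auto simp: doubleton_eq_iff)
qed

lemma hard_word_walk_drift:
  assumes n: "4 \<le> n" and walk: "temporal_walk n (hard_word n) vs ts"
    and "i < i'" "i' < length ts" "x \<in> {vs ! i, vs ! Suc i}" "x' \<in> {vs ! i', vs ! Suc i'}"
  shows "x' \<le> x + (i' - i) + 1"
proof -
  have "length vs = Suc (length ts)" using walk unfolding temporal_walk_def by simp
  then have bound: "vs ! j \<le> vs ! Suc i + (j - Suc i)" if "Suc i \<le> j" "j \<le> i' + 1" for j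
    using nth_le_add_index_diff[of vs "Suc i" j] hard_word_walk_step[OF n walk] assms(4) that by fastforce
  have "x' \<le> vs ! Suc i + (i' - i)"
    using bound[of i'] bound[of "Suc i'"] assms(3,6) by auto
  moreover have "vs ! Suc i \<le> x + 1"
    using hard_word_walk_step[OF n walk, of i] assms(3-5) by auto
  ultimately show ?thesis by linarith
qed

text \<open>P i is a position in the factor of the i-th step carrying an endpoint of the i-th edge.\<close>

lemma hard_word_walk_positions:
  assumes n: "4 \<le> n" and walk: "temporal_walk n (hard_word n) vs ts"
  obtains P where "\<And>i. i < length ts \<Longrightarrow> P i < 4 * last ts"
    and "\<And>i i'. i < i' \<Longrightarrow> i' < length ts \<Longrightarrow> P i div (2 * n) = P i' div (2 * n) \<Longrightarrow> i' < i + 8"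
proof -
  define w where "w = hard_word n"
  obtain P where P: "\<And>i. i < length ts \<Longrightarrow> w ! P i \<in> {vs ! i, vs ! Suc i} \<and>
      factor_start w (ts ! i) \<le> P i \<and> P i < factor_end w (ts ! i)"
    using temporal_walk_positions walk unfolding w_def by metis
  have sorted: "sorted_wrt (<) ts" and times: "\<And>i. i < length ts \<Longrightarrow> 1 \<le> ts ! i \<and> ts ! i \<le> numT w"
    and "ts \<noteq> []"
    using walk unfolding temporal_walk_def w_def by auto
  have window: "repeat_in_windows 4 w" "distinct_adj w" "no_quick_recurrence 4 w"
    using repeat_in_windows_hard_word distinct_adj_hard_word no_quick_recurrence_hard_word n
    unfolding w_def by auto
  have near: "2 * (w ! P i) \<le> P i mod (2 * n) + 1 \<and> P i mod (2 * n) \<le> 2 * (w ! P i) + 2"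
    if "i < length ts" for i
  proof -
    have "P i < 4 * n ^ 2"
      using P[OF that] factor_end_le_length[of w] length_hard_word unfolding w_def by (metis order.strict_trans2)
    then show ?thesis using block_letter_pos[of "P i mod (2 * n)" n] hard_word_nth n unfolding w_def by simp
  qed
  show ?thesis
  proof
    show "P i < 4 * last ts" if "i < length ts" for i
    proof -
      have "P i < 4 * ts ! i"
        using P[OF that] factor_end_le_mult[OF window(1)] times[OF that] by (meson order.strict_trans2)
      moreover have "ts ! i + (length ts - 1 - i) \<le> ts ! (length ts - 1)"
        using sorted_wrt_less_nth_add[OF sorted, of i "length ts - 1"] that by simp
      then have "ts ! i \<le> last ts" using \<open>ts \<noteq> []\<close> by (simp add: last_conv_nth)
      ultimately show ?thesis by simp
    qed
    show "i' < i + 8" if "i < i'" "i' < length ts" "P i div (2 * n) = P i' div (2 * n)" for i i'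
    proof -
      have "ts ! i < ts ! i'" using sorted_wrt_nth_less[OF sorted that(1)] that(2) by simp
      then have "P i + 3 * (ts ! i' - ts ! i) \<le> P i' + 2"
        using factor_positions_spread[OF window times[of i, THEN conjunct1] _ times[of i', THEN conjunct2]]
          P[of i] P[of i'] that(1,2) by simp
      moreover have "ts ! i + (i' - i) \<le> ts ! i'"
        using sorted_wrt_less_nth_add[OF sorted less_imp_le[OF that(1)] that(2)] .
      ultimately have "P i + 3 * (i' - i) \<le> P i' + 2" by linarith
      moreover have "P i = P i div (2 * n) * (2 * n) + P i mod (2 * n)"
        by (rule div_mult_mod_eq[symmetric])
      moreover have "P i' = P i div (2 * n) * (2 * n) + P i' mod (2 * n)"
        unfolding that(3) by (rule div_mult_mod_eq[symmetric])
      ultimately have "P i mod (2 * n) + 3 * (i' - i) \<le> P i' mod (2 * n) + 2" by linarith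
      moreover have "w ! P i' \<le> w ! P i + (i' - i) + 1"
        using hard_word_walk_drift[OF n walk that(1,2)] P that unfolding w_def by simp
      ultimately show ?thesis using near[of i] near[of i'] that(1,2) by linarith
    qed
  qed
qed

lemma hard_word_exploration_time:
  assumes n: "4 \<le> n" and walk: "temporal_walk n (hard_word n) vs ts" and visits: "set vs = {0..<n}"
  shows "n * (n - 9) \<le> 16 * last ts"
proof -
  define R where "R = 4 * last ts div (2 * n)"
  obtain P where P: "\<And>i. i < length ts \<Longrightarrow> P i < 4 * last ts"
    and close: "\<And>i i'. i < i' \<Longrightarrow> i' < length ts \<Longrightarrow> P i div (2 * n) = P i' div (2 * n) \<Longrightarrow> i' < i + 8"
    using hard_word_walk_positions[OF n walk] by blast
  have "P i div (2 * n) \<le> R" if "i < length ts" for i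
    unfolding R_def by (rule div_le_mono) (use P[OF that] in simp)
  then have "card {0..<length ts} \<le> 8 * (R + 1)"
    by (intro card_le_if_fibres_close[where f = "\<lambda>i. P i div (2 * n)"]) (auto intro: close)
  moreover have "n \<le> Suc (length ts)"
    using card_length[of vs] visits walk unfolding temporal_walk_def by simp
  ultimately have "n - 9 \<le> 8 * R" by simp
  then have "n * (n - 9) \<le> 4 * (2 * n * R)" using mult_le_mono2[of "n - 9" "8 * R" n] by simp
  moreover have "2 * n * R \<le> 4 * last ts" unfolding R_def by (rule times_div_less_eq_dividend)
  ultimately show ?thesis by linarith
qed

theorem theorem17:
  shows "\<exists>c::real > 0. \<exists>n0::nat. \<forall>n \<ge> n0. \<exists>w :: nat list.
            length w = 4 * n ^ 2 \<and> set w \<subseteq> {0..<n} \<and>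
            temporal_path_graph n w \<and>
            (\<forall>vs ts. temporal_walk n w vs ts \<and> set vs = {0..<n} \<longrightarrow>
                real (last ts) \<ge> c * real n ^ 2)"
proof (intro exI[of _ "1 / 32"] conjI exI[of _ 18] allI impI)
  fix n :: nat assume n: "18 \<le> n"
  show "\<exists>w. length w = 4 * n ^ 2 \<and> set w \<subseteq> {0..<n} \<and> temporal_path_graph n w \<and>
      (\<forall>vs ts. temporal_walk n w vs ts \<and> set vs = {0..<n} \<longrightarrow> real (last ts) \<ge> 1 / 32 * real n ^ 2)"
  proof (intro exI[of _ "hard_word n"] conjI allI impI)
    show "length (hard_word n) = 4 * n ^ 2" "set (hard_word n) \<subseteq> {0..<n}"
      "temporal_path_graph n (hard_word n)"
      using length_hard_word set_hard_word temporal_path_graph_hard_word n by auto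
    fix vs ts assume "temporal_walk n (hard_word n) vs ts \<and> set vs = {0..<n}"
    then have "n * (n - 9) \<le> 16 * last ts" using hard_word_exploration_time n by auto
    have "n ^ 2 \<le> n * (2 * (n - 9))" using n by (simp add: power2_eq_square)
    also have "\<dots> \<le> 32 * last ts" using \<open>n * (n - 9) \<le> 16 * last ts\<close> by simp
    finally have "real (n ^ 2) \<le> real (32 * last ts)" by (simp only: of_nat_le_iff)
    then show "real (last ts) \<ge> 1 / 32 * real n ^ 2" by simp
  qed
qed simp
end
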